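(* Let $(X,T)$ be a topologically transitive system. Then either $(X,T)$ is thickly sensitive (and then $\mathrm{Eq}_{\mathrm{syn}}(X,T)=\varnothing$), or $\mathrm{Tran}(X,T)\subset \mathrm{Eq}_{\mathrm{syn}}(X,T)$. In particular, if $(X,T)$ is minimal then it is either thickly sensitive or syndetically equicontinuous.
   Context: $(X,\varrho)$ compact metric, $T$ continuous surjection. $S_T(U,\delta)=\{n\in\mathbb{N}:\exists x_1,x_2\in U,\ \varrho(T^nx_1,T^nx_2)>\delta\}$ and $J_T(U,\delta)=\mathbb N\setminus S_T(U,\delta)$. A set $\mathcal S\subset\mathbb N$ is thick if it contains arbitrarily long blocks of consecutive integers, syndetic if it has bounded gaps (there is $m$ with $\mathcal S\cap\{n,\dots,n+m\}\ne\varnothing$ for all $n$). $(X,T)$ is thickly sensitive if there is $\delta>0$ with $S_T(U,\delta)$ thick for all opene $U$. A point $x$ is syndetically equicontinuous if for every $\varepsilon>0$ there is a neighborhood $U$ of $x$ with $J_T(U,\varepsilon)$ syndetic; $\mathrm{Eq}_{\mathrm{syn}}(X,T)$ is the set of such points, and $(X,T)$ is syndetically equicontinuous if $\mathrm{Eq}_{\mathrm{syn}}(X,T)=X$. $\mathrm{Tran}(X,T)$ is the set of points with dense orbit; transitive means $\mathrm{Tran}(X,T)\ne\varnothing$; minimal means $\mathrm{Tran}(X,T)=X$. *)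

theory Defs
  imports "HOL-Analysis.Analysis"
begin

definition tds :: "'a::metric_space set \<Rightarrow> ('a \<Rightarrow> 'a) \<Rightarrow> bool" where
  "tds X T \<longleftrightarrow> compact X \<and> continuous_on X T \<and> T ` X = X"

definition S_T :: "('a::metric_space \<Rightarrow> 'a) \<Rightarrow> 'a set \<Rightarrow> real \<Rightarrow> nat set" where
  "S_T T U \<delta> = {n. \<exists>x1\<in>U. \<exists>x2\<in>U. dist ((T ^^ n) x1) ((T ^^ n) x2) > \<delta>}"

definition J_T :: "('a::metric_space \<Rightarrow> 'a) \<Rightarrow> 'a set \<Rightarrow> real \<Rightarrow> nat set" where
  "J_T T U \<delta> = UNIV - S_T T U \<delta>"

definition thick :: "nat set \<Rightarrow> bool" where
  "thick S \<longleftrightarrow> (\<forall>k. \<exists>n. {n..n+k} \<subseteq> S)"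

definition syndetic :: "nat set \<Rightarrow> bool" where
  "syndetic S \<longleftrightarrow> (\<exists>m. \<forall>n. S \<inter> {n..n+m} \<noteq> {})"

definition thickly_sensitive :: "'a::metric_space set \<Rightarrow> ('a \<Rightarrow> 'a) \<Rightarrow> bool" where
  "thickly_sensitive X T \<longleftrightarrow>
     (\<exists>\<delta>>0. \<forall>U. openin (top_of_set X) U \<and> U \<noteq> {} \<longrightarrow> thick (S_T T U \<delta>))"

definition Eq_syn :: "'a::metric_space set \<Rightarrow> ('a \<Rightarrow> 'a) \<Rightarrow> 'a set" where
  "Eq_syn X T = {x\<in>X. \<forall>\<epsilon>>0. \<exists>U. openin (top_of_set X) U \<and> x \<in> U \<and> syndetic (J_T T U \<epsilon>)}"

definition syndetically_equicontinuous :: "'a::metric_space set \<Rightarrow> ('a \<Rightarrow> 'a) \<Rightarrow> bool" where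
  "syndetically_equicontinuous X T \<longleftrightarrow> Eq_syn X T = X"

definition Tran :: "'a::metric_space set \<Rightarrow> ('a \<Rightarrow> 'a) \<Rightarrow> 'a set" where
  "Tran X T = {x\<in>X. X \<subseteq> closure {(T ^^ n) x | n. True}}"

definition transitive_sys :: "'a::metric_space set \<Rightarrow> ('a \<Rightarrow> 'a) \<Rightarrow> bool" where
  "transitive_sys X T \<longleftrightarrow> Tran X T \<noteq> {}"

definition minimal_sys :: "'a::metric_space set \<Rightarrow> ('a \<Rightarrow> 'a) \<Rightarrow> bool" where
  "minimal_sys X T \<longleftrightarrow> Tran X T = X"

end

theory Submission
  imports Defs
begin

text \<open>If the system is not thickly sensitive, then for every \<open>\<epsilon> > 0\<close> some nonempty open
  \<open>U\<close> has \<open>S_T(U,\<epsilon>)\<close> not thick, i.e. \<open>J_T(U,\<epsilon>)\<close> syndetic. A transitive point \<open>x\<close> visits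
  \<open>U\<close> at some time \<open>k\<close>, so \<open>V = T\<^sup>-\<^sup>k U\<close> is an open neighbourhood of \<open>x\<close> with
  \<open>J_T(U,\<epsilon>) + k \<subseteq> J_T(V,\<epsilon>)\<close>; a shift of a syndetic set is syndetic, so \<open>x\<close> is syndetically
  equicontinuous. Conversely a thick set meets every syndetic set, and \<open>S_T(U,\<delta>)\<close> and
  \<open>J_T(U,\<delta>)\<close> are disjoint, so under thick sensitivity no point is syndetically
  equicontinuous. For minimal systems \<open>Tran X T = X\<close>; the empty system is vacuously
  thickly sensitive.\<close>

lemma syndetic_Compl_iff_not_thick: "syndetic (- S) \<longleftrightarrow> \<not> thick S"
  unfolding thick_def syndetic_def by blast

lemma syndetic_shift:
  assumes "syndetic J" and "(\<lambda>n. n + k) ` J \<subseteq> J'"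
  shows "syndetic J'"
proof -
  obtain m where m: "\<And>n. J \<inter> {n..n+m} \<noteq> {}"
    using assms(1) unfolding syndetic_def by blast
  have "J' \<inter> {n..n + (m + k)} \<noteq> {}" for n
  proof -
    obtain j where "j \<in> J" "n - k \<le> j" "j \<le> n - k + m"
      using m[of "n - k"] by auto
    then have "j + k \<in> J' \<inter> {n..n + (m + k)}"
      using assms(2) by auto
    then show ?thesis
      by blast
  qed
  then show ?thesis
    unfolding syndetic_def by blast
qed

lemma J_T_eq_Compl_S_T: "J_T T U \<delta> = - S_T T U \<delta>"
  unfolding J_T_def by blast

lemma J_T_shift_preimage:
  assumes "V \<subseteq> (T ^^ k) -` U"
  shows "(\<lambda>n. n + k) ` J_T T U \<delta> \<subseteq> J_T T V \<delta>"
  using assms unfolding J_T_def S_T_def by (fastforce simp: funpow_add)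

lemma funpow_image_subset:
  assumes "f ` S \<subseteq> S"
  shows "(f ^^ n) ` S \<subseteq> S"
  using assms by (induction n) (auto simp: image_subset_iff)

lemma continuous_on_funpow:
  assumes "continuous_on S f" and "f ` S \<subseteq> S"
  shows "continuous_on S (f ^^ n)"
proof (induction n)
  case 0
  then show ?case by (simp add: continuous_on_id)
next
  case (Suc n)
  have "continuous_on S (f \<circ> f ^^ n)"
    using Suc continuous_on_subset[OF assms(1) funpow_image_subset[OF assms(2)]]
    by (rule continuous_on_compose)
  then show ?case by simp
qed

lemma Tran_visits_openin:
  assumes "T ` X \<subseteq> X" and "x \<in> Tran X T" and "openin (top_of_set X) U" and "U \<noteq> {}"
  shows "\<exists>k. (T ^^ k) x \<in> U"
proof -
  have x: "x \<in> X" "X \<subseteq> closure {(T ^^ n) x | n. True}"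
    using assms(2) unfolding Tran_def by auto
  obtain W where W: "open W" "U = X \<inter> W"
    using assms(3) by (auto simp: openin_open)
  obtain u where "u \<in> U"
    using assms(4) by blast
  then have "W \<inter> closure {(T ^^ n) x | n. True} \<noteq> {}"
    using x(2) W(2) by auto
  then obtain k where "(T ^^ k) x \<in> W"
    unfolding open_Int_closure_eq_empty[OF W(1)] by blast
  moreover have "(T ^^ k) x \<in> X"
    using funpow_image_subset[OF assms(1)] x(1) by blast
  ultimately show ?thesis
    using W(2) by blast
qed

lemma Tran_subset_Eq_syn_if_not_thickly_sensitive:
  assumes "tds X T" and "\<not> thickly_sensitive X T"
  shows "Tran X T \<subseteq> Eq_syn X T"
proof
  fix x assume x: "x \<in> Tran X T"
  have TX: "T ` X \<subseteq> X" and cont: "continuous_on X (T ^^ k)" for k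
    using assms(1) continuous_on_funpow[of X T] unfolding tds_def by auto
  have "\<exists>V. openin (top_of_set X) V \<and> x \<in> V \<and> syndetic (J_T T V \<epsilon>)" if "\<epsilon> > 0" for \<epsilon>
  proof -
    obtain U where U: "openin (top_of_set X) U" "U \<noteq> {}" "syndetic (J_T T U \<epsilon>)"
      using assms(2) \<open>\<epsilon> > 0\<close>
      unfolding thickly_sensitive_def J_T_eq_Compl_S_T syndetic_Compl_iff_not_thick by blast
    obtain k where "(T ^^ k) x \<in> U"
      using Tran_visits_openin[OF TX x U(1,2)] by blast
    moreover have "x \<in> X"
      using x unfolding Tran_def by blast
    moreover have "openin (top_of_set X) (X \<inter> (T ^^ k) -` U)"
      using funpow_image_subset[OF TX] U(1) unfolding image_subset_iff_funcset
      by (rule continuous_openin_preimage[OF cont])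
    moreover have "syndetic (J_T T (X \<inter> (T ^^ k) -` U) \<epsilon>)"
      using U(3) J_T_shift_preimage by (rule syndetic_shift) blast
    ultimately show ?thesis
      by blast
  qed
  then show "x \<in> Eq_syn X T"
    using x unfolding Eq_syn_def Tran_def by blast
qed

lemma Eq_syn_empty_if_thickly_sensitive:
  assumes "thickly_sensitive X T"
  shows "Eq_syn X T = {}"
proof -
  obtain \<delta> where "\<delta> > 0"
    and "\<And>U. openin (top_of_set X) U \<Longrightarrow> U \<noteq> {} \<Longrightarrow> thick (S_T T U \<delta>)"
    using assms unfolding thickly_sensitive_def by blast
  then show ?thesis
    unfolding Eq_syn_def J_T_eq_Compl_S_T syndetic_Compl_iff_not_thick by blast
qed

lemma thickly_sensitive_empty: "thickly_sensitive {} T"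
  unfolding thickly_sensitive_def by (auto intro: exI[of _ 1] dest: openin_subset)

theorem theorem3p4:
  fixes X :: "'a::metric_space set" and T :: "'a \<Rightarrow> 'a"
  assumes "tds X T"
  shows "(transitive_sys X T \<longrightarrow>
            ((thickly_sensitive X T \<and> Eq_syn X T = {}) \<or> Tran X T \<subseteq> Eq_syn X T))
       \<and> (minimal_sys X T \<longrightarrow>
            thickly_sensitive X T \<or> syndetically_equicontinuous X T)"
proof -
  have dichotomy: "(thickly_sensitive X T \<and> Eq_syn X T = {}) \<or> Tran X T \<subseteq> Eq_syn X T"
    using Tran_subset_Eq_syn_if_not_thickly_sensitive[OF assms]
      Eq_syn_empty_if_thickly_sensitive by blast
  moreover have "Eq_syn X T \<subseteq> X"
    unfolding Eq_syn_def by blast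
  ultimately show ?thesis
    using thickly_sensitive_empty[of T]
    unfolding minimal_sys_def syndetically_equicontinuous_def by blast
qed

end
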